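(* The family of curves $\tanh\xi = \tan\eta\,\tan 2t$, $0<t<\frac\pi4$, where $\xi=x+y$ and $\eta=x-y$, is a solution to the mean curvature flow in the Minkowski plane $\mathbf R^{1,1}$.
   Context: $\mathbf R^{1,1}$ is $\mathbf R^2$ with $\langle (x_1,y_1),(x_2,y_2)\rangle = x_1x_2-y_1y_2$. For a space-like curve (tangent $v$ with $\langle v,v\rangle>0$), with Minkowski arc-length $s$, $T=X_s$, $N$ the reflection of $T$ across $y=x$, and $T_s=kN$, mean curvature flow means $\langle\partial_tX,N\rangle=-k$; equivalently, writing the curve as $\xi=\xi(\eta,t)$ with $\xi_\eta>0$, $\xi_t=\xi_{\eta\eta}/\xi_\eta$. *)

theory Defs
  imports "HOL-Analysis.Analysis"
begin

text \<open>Mean curvature flow in the Minkowski plane R^{1,1}, in the graph form given in the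
context: in null coordinates xi = x + y, eta = x - y, a space-like curve is (locally) a graph
xi = f(eta, t) with f_eta > 0, and the flow is  f_t = f_{eta eta} / f_eta.\<close>

definition mcf_solution :: "real set \<Rightarrow> (real \<Rightarrow> (real \<times> real) set) \<Rightarrow> bool" where
  "mcf_solution I C \<longleftrightarrow>
     (\<exists>D :: (real \<times> real) set. \<exists>f fe fee ft :: real \<Rightarrow> real \<Rightarrow> real.
        open D \<and>
        (\<forall>t\<in>I. C t = {(x, y). (x - y, t) \<in> D \<and> x + y = f (x - y) t}) \<and>
        (\<forall>e t. (e, t) \<in> D \<longrightarrow>
            ((\<lambda>e'. f e' t) has_real_derivative fe e t) (at e) \<and>
            ((\<lambda>e'. fe e' t) has_real_derivative fee e t) (at e) \<and>
            ((\<lambda>t'. f e t') has_real_derivative ft e t) (at t) \<and>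
            fe e t > 0 \<and>
            ft e t = fee e t / fe e t))"

end

theory Submission
  imports Defs
begin

text \<open>In the null coordinates the curves are the graphs \<open>\<xi> = artanh (tan \<eta> tan 2t)\<close>.
Writing \<open>u = tan \<eta>\<close> and \<open>c = tan 2t\<close>, so that \<open>\<partial>\<^sub>\<eta>u = 1 + u\<^sup>2\<close> and \<open>\<partial>\<^sub>tc = 2(1 + c\<^sup>2)\<close>,
one finds \<open>\<xi>\<^sub>\<eta> = c(1 + u\<^sup>2)/(1 - u\<^sup>2c\<^sup>2)\<close>, \<open>\<xi>\<^sub>\<eta>\<^sub>\<eta> = 2cu(1 + c\<^sup>2)(1 + u\<^sup>2)/(1 - u\<^sup>2c\<^sup>2)\<^sup>2\<close> and
\<open>\<xi>\<^sub>t = 2u(1 + c\<^sup>2)/(1 - u\<^sup>2c\<^sup>2)\<close>, which is exactly \<open>\<xi>\<^sub>\<eta>\<^sub>\<eta>/\<xi>\<^sub>\<eta>\<close>. The graph is defined where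
\<open>|u c| < 1\<close>, i.e. \<open>|sin \<eta> sin 2t| < |cos \<eta> cos 2t|\<close>, an open condition; there \<open>\<xi>\<^sub>\<eta> > 0\<close>
because \<open>c > 0\<close> for \<open>0 < t < \<pi>/4\<close>.\<close>

lemma tanh_artanh_real:
  fixes w :: real
  assumes "\<bar>w\<bar> < 1"
  shows "tanh (artanh w) = w"
proof -
  have tanh_exp: "tanh x = (exp (2 * x) - 1) / (exp (2 * x) + 1)" for x :: real
  proof -
    have "exp (2 * x) = exp x * exp x"
      by (metis mult_2 exp_add)
    then show ?thesis
      by (simp add: tanh_altdef exp_minus divide_simps)
  qed
  have "exp (2 * artanh w) = (1 + w) / (1 - w)"
    using assms by (simp add: artanh_def abs_less_iff)
  then have "tanh (artanh w) = ((1 + w) / (1 - w) - 1) / ((1 + w) / (1 - w) + 1)"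
    by (simp only: tanh_exp)
  also have "\<dots> = w"
    using assms by (auto simp: field_simps abs_less_iff)
  finally show ?thesis .
qed

lemma tanh_eq_iff_artanh_real: "tanh (s :: real) = w \<longleftrightarrow> \<bar>w\<bar> < 1 \<and> s = artanh w"
  using tanh_real_bounds[of s] artanh_tanh_real[of s] tanh_artanh_real[of w] by auto

lemma abs_sin_mult_less_abs_cos_mult_iff:
  fixes a b :: real
  assumes "cos b \<noteq> 0"
  shows "\<bar>sin a * sin b\<bar> < \<bar>cos a * cos b\<bar> \<longleftrightarrow> cos a \<noteq> 0 \<and> \<bar>tan a * tan b\<bar> < 1"
proof (cases "cos a = 0")
  case False
  then have "\<bar>sin a * sin b\<bar> = \<bar>tan a * tan b\<bar> * \<bar>cos a * cos b\<bar>"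
    using assms by (simp add: tan_def abs_mult)
  then show ?thesis
    using False assms by (simp add: abs_mult)
qed simp

lemma DERIV_tan_real: "cos x \<noteq> 0 \<Longrightarrow> (tan has_real_derivative 1 + (tan x)\<^sup>2) (at x)"
  using DERIV_tan[of x] by (simp add: tan_sec power_inverse)

lemma DERIV_artanh_real [derivative_intros]:
  fixes f :: "real \<Rightarrow> real"
  assumes "(f has_real_derivative f') (at x within A)" "\<bar>f x\<bar> < 1"
  shows "((\<lambda>x. artanh (f x)) has_real_derivative f' / (1 - (f x)\<^sup>2)) (at x within A)"
  using DERIV_chain2[OF artanh_real_has_field_derivative[OF assms(2)] assms(1)] by simp

lemma DERIV_artanh_tan_mult:
  fixes c e :: real
  assumes "cos e \<noteq> 0" "\<bar>tan e * c\<bar> < 1"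
  shows "((\<lambda>e. artanh (tan e * c)) has_real_derivative
           c * (1 + (tan e)\<^sup>2) / (1 - (tan e * c)\<^sup>2)) (at e)"
  using assms by (auto intro!: derivative_eq_intros simp: tan_sec power_inverse)

lemma DERIV_artanh_mult_tan_double:
  fixes u t :: real
  assumes "cos (2 * t) \<noteq> 0" "\<bar>u * tan (2 * t)\<bar> < 1"
  shows "((\<lambda>t. artanh (u * tan (2 * t))) has_real_derivative
           2 * u * (1 + (tan (2 * t))\<^sup>2) / (1 - (u * tan (2 * t))\<^sup>2)) (at t)"
  using assms by (auto intro!: derivative_eq_intros simp: tan_sec power_inverse)

lemma DERIV_tan_slope:
  fixes c e :: real
  assumes "cos e \<noteq> 0" "\<bar>tan e * c\<bar> < 1"
  shows "((\<lambda>e. c * (1 + (tan e)\<^sup>2) / (1 - (tan e * c)\<^sup>2)) has_real_derivative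
           2 * c * tan e * (1 + c\<^sup>2) * (1 + (tan e)\<^sup>2) / (1 - (tan e * c)\<^sup>2)\<^sup>2) (at e)"
proof -
  have "((\<lambda>u. c * (1 + u\<^sup>2) / (1 - (u * c)\<^sup>2)) has_real_derivative
          2 * c * u * (1 + c\<^sup>2) / (1 - (u * c)\<^sup>2)\<^sup>2) (at u)" if "\<bar>u * c\<bar> < 1" for u
  proof -
    have "(u * c)\<^sup>2 \<noteq> 1"
      using that by (simp add: abs_square_eq_1)
    then show ?thesis
      by (auto intro!: derivative_eq_intros simp: field_simps power2_eq_square)
  qed
  from DERIV_chain2[OF this[OF assms(2)] DERIV_tan_real[OF assms(1)]] show ?thesis
    by (simp add: o_def)
qed

lemma tan_slope_quotient:
  fixes c u :: real
  assumes "c \<noteq> 0" "\<bar>u * c\<bar> < 1"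
  shows "2 * u * (1 + c\<^sup>2) / (1 - (u * c)\<^sup>2) =
           (2 * c * u * (1 + c\<^sup>2) * (1 + u\<^sup>2) / (1 - (u * c)\<^sup>2)\<^sup>2) /
           (c * (1 + u\<^sup>2) / (1 - (u * c)\<^sup>2))"
proof -
  have "1 - (u * c)\<^sup>2 \<noteq> 0"
    using assms(2) by (simp add: abs_square_eq_1)
  moreover have "1 + u\<^sup>2 \<noteq> 0"
    by (smt (verit) zero_le_power2)
  ultimately show ?thesis
    using assms(1) by (simp add: divide_simps) (simp add: algebra_simps power2_eq_square)
qed

lemma cos_tan_double_pos:
  fixes t :: real
  assumes "0 < t" "t < pi / 4"
  shows "cos (2 * t) > 0" "tan (2 * t) > 0"
  using assms by (auto intro: cos_gt_zero_pi tan_gt_zero)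

theorem theorem11p2:
  shows "mcf_solution {0<..<pi/4}
           (\<lambda>t. {(x :: real, y :: real). cos (x - y) \<noteq> 0 \<and>
                   tanh (x + y) = tan (x - y) * tan (2 * t)})"
proof -
  define D :: "(real \<times> real) set" where "D = {p. 0 < snd p \<and> snd p < pi / 4 \<and>
    \<bar>sin (fst p) * sin (2 * snd p)\<bar> < \<bar>cos (fst p) * cos (2 * snd p)\<bar>}"
  have "open D"
    unfolding D_def by (intro open_Collect_conj open_Collect_less continuous_intros)
  have D_iff: "(e, t) \<in> D \<longleftrightarrow> t \<in> {0<..<pi/4} \<and> cos e \<noteq> 0 \<and> \<bar>tan e * tan (2 * t)\<bar> < 1" for e t
    using abs_sin_mult_less_abs_cos_mult_iff[of "2 * t" e] cos_tan_double_pos(1)[of t]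
    unfolding D_def by (auto simp: mult.commute)
  show ?thesis
    unfolding mcf_solution_def
  proof (intro exI conjI ballI allI impI)
    show "open D" by fact
  next
    fix t :: real assume "t \<in> {0<..<pi/4}"
    then show "{(x, y). cos (x - y) \<noteq> 0 \<and> tanh (x + y) = tan (x - y) * tan (2 * t)} =
      {(x, y). (x - y, t) \<in> D \<and> x + y = artanh (tan (x - y) * tan (2 * t))}"
      by (auto simp: D_iff tanh_eq_iff_artanh_real)
  next
    fix e t assume "(e, t) \<in> D"
    then have e: "cos e \<noteq> 0" "\<bar>tan e * tan (2 * t)\<bar> < 1" and "0 < t" "t < pi / 4"
      by (auto simp: D_iff)
    note c = cos_tan_double_pos[OF \<open>0 < t\<close> \<open>t < pi / 4\<close>]
    show "((\<lambda>e. artanh (tan e * tan (2 * t))) has_real_derivative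
            tan (2 * t) * (1 + (tan e)\<^sup>2) / (1 - (tan e * tan (2 * t))\<^sup>2)) (at e)"
      using DERIV_artanh_tan_mult[OF e] .
    show "((\<lambda>e. tan (2 * t) * (1 + (tan e)\<^sup>2) / (1 - (tan e * tan (2 * t))\<^sup>2)) has_real_derivative
            2 * tan (2 * t) * tan e * (1 + (tan (2 * t))\<^sup>2) * (1 + (tan e)\<^sup>2) /
            (1 - (tan e * tan (2 * t))\<^sup>2)\<^sup>2) (at e)"
      using DERIV_tan_slope[OF e] .
    show "((\<lambda>t. artanh (tan e * tan (2 * t))) has_real_derivative
            2 * tan e * (1 + (tan (2 * t))\<^sup>2) / (1 - (tan e * tan (2 * t))\<^sup>2)) (at t)"
      using DERIV_artanh_mult_tan_double c e(2) by simp
    show "tan (2 * t) * (1 + (tan e)\<^sup>2) / (1 - (tan e * tan (2 * t))\<^sup>2) > 0"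
      using c e(2) by (simp add: abs_square_less_1 add_pos_nonneg)
    show "2 * tan e * (1 + (tan (2 * t))\<^sup>2) / (1 - (tan e * tan (2 * t))\<^sup>2) =
      2 * tan (2 * t) * tan e * (1 + (tan (2 * t))\<^sup>2) * (1 + (tan e)\<^sup>2) /
        (1 - (tan e * tan (2 * t))\<^sup>2)\<^sup>2 /
      (tan (2 * t) * (1 + (tan e)\<^sup>2) / (1 - (tan e * tan (2 * t))\<^sup>2))"
      using tan_slope_quotient c e(2) by simp
  qed
qed

end
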